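(* Let $G$ be a 2-connected simple graph with maximum degree $\Delta(G)$. Then $\phi(G)\ge \lfloor \Delta(G)/2\rfloor$.
   Context: For a graph $G$, $\phi(G)$ is the maximum number of pairwise edge-disjoint cycles in $G$. *)

theory Defs
  imports Main
begin

definition simple_graph :: "'a set \<Rightarrow> 'a set set \<Rightarrow> bool" where
  "simple_graph V E \<longleftrightarrow> finite V \<and>
     (\<forall>e\<in>E. \<exists>u v. u \<noteq> v \<and> u \<in> V \<and> v \<in> V \<and> e = {u, v})"

definition degree :: "'a set set \<Rightarrow> 'a \<Rightarrow> nat" where
  "degree E v = card {e \<in> E. v \<in> e}"

definition max_degree :: "'a set \<Rightarrow> 'a set set \<Rightarrow> nat" where
  "max_degree V E = Max (degree E ` V)"

definition adj :: "'a set set \<Rightarrow> 'a \<Rightarrow> 'a \<Rightarrow> bool" where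
  "adj E u v \<longleftrightarrow> {u, v} \<in> E"

definition connected_graph :: "'a set \<Rightarrow> 'a set set \<Rightarrow> bool" where
  "connected_graph V E \<longleftrightarrow> V \<noteq> {} \<and> (\<forall>u\<in>V. \<forall>v\<in>V. (adj E)\<^sup>*\<^sup>* u v)"

definition del_vertex_edges :: "'a set set \<Rightarrow> 'a \<Rightarrow> 'a set set" where
  "del_vertex_edges E x = {e \<in> E. x \<notin> e}"

definition two_connected :: "'a set \<Rightarrow> 'a set set \<Rightarrow> bool" where
  "two_connected V E \<longleftrightarrow> card V \<ge> 3 \<and> connected_graph V E \<and>
     (\<forall>x\<in>V. connected_graph (V - {x}) (del_vertex_edges E x))"

definition cycle_edges :: "'a list \<Rightarrow> 'a set set" where
  "cycle_edges vs = {{vs ! i, vs ! ((i + 1) mod length vs)} | i. i < length vs}"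

definition is_cycle :: "'a set set \<Rightarrow> 'a set set \<Rightarrow> bool" where
  "is_cycle E C \<longleftrightarrow> (\<exists>vs. length vs \<ge> 3 \<and> distinct vs \<and> C = cycle_edges vs \<and> C \<subseteq> E)"

definition phi :: "'a set set \<Rightarrow> nat" where
  "phi E = Max {card \<C> | \<C>. \<C> \<subseteq> {C. is_cycle E C} \<and> pairwise disjnt \<C>}"

end

theory Submission
  imports Defs "HOL-Library.Transitive_Closure_Table"
begin

text \<open>Let \<open>v\<close> be a vertex of maximum degree \<open>\<Delta>\<close> and \<open>S\<close> a set of \<open>2 \<lfloor>\<Delta>/2\<rfloor>\<close> neighbours of \<open>v\<close>.
  Since \<open>G - v\<close> is connected, every component of \<open>G - v\<close> meets \<open>S\<close> in an even number of vertices,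
  and any vertex set with this property splits into pairs joined by pairwise edge-disjoint paths.
  The latter is shown by induction on the number of edges: when a new edge \<open>xy\<close> merges two
  components meeting \<open>S\<close> in odd sets, one pairs up \<open>S\<close> with \<open>x\<close> and \<open>y\<close> toggled and then reroutes
  the paths at \<open>x\<close> and \<open>y\<close> through \<open>xy\<close>. Closing each path through \<open>v\<close> gives \<open>\<lfloor>\<Delta>/2\<rfloor>\<close>
  edge-disjoint cycles.\<close>

lemma symp_adj: "symp (adj E)"
  by (auto intro: sympI simp: adj_def insert_commute)

lemma adj_rtranclp_sym: "(adj E)\<^sup>*\<^sup>* u v \<Longrightarrow> (adj E)\<^sup>*\<^sup>* v u"
  by (rule sympD[OF symp_rtranclp[OF symp_adj]])

lemma adj_rtranclp_mono: "F \<subseteq> G \<Longrightarrow> (adj F)\<^sup>*\<^sup>* u v \<Longrightarrow> (adj G)\<^sup>*\<^sup>* u v"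
  by (metis adj_def mono_rtranclp subset_eq)

lemma adj_component_eq:
  "(adj E)\<^sup>*\<^sup>* z x \<Longrightarrow> {t \<in> A. (adj E)\<^sup>*\<^sup>* z t} = {t \<in> A. (adj E)\<^sup>*\<^sup>* x t}"
  by (meson adj_rtranclp_sym rtranclp_trans)

lemma adj_insert_non_doubleton: "\<nexists>x y. e = {x, y} \<Longrightarrow> adj (insert e E) = adj E"
  by (auto simp: adj_def fun_eq_iff)

lemma adj_insert_doubleton:
  "adj (insert {x, y} E) a b \<longleftrightarrow> adj E a b \<or> (a = x \<and> b = y) \<or> (a = y \<and> b = x)"
  by (auto simp: adj_def doubleton_eq_iff)

lemma rtranclp_adj_insert_doubleton:
  "(adj (insert {x, y} E))\<^sup>*\<^sup>* u w \<longleftrightarrow>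
     (adj E)\<^sup>*\<^sup>* u w \<or> (adj E)\<^sup>*\<^sup>* u x \<and> (adj E)\<^sup>*\<^sup>* y w \<or> (adj E)\<^sup>*\<^sup>* u y \<and> (adj E)\<^sup>*\<^sup>* x w"
    (is "?R2 u w \<longleftrightarrow> ?rhs")
proof
  show "?R2 u w \<Longrightarrow> ?rhs"
    by (induction rule: rtranclp_induct)
      (auto simp: adj_insert_doubleton intro: rtranclp.rtrancl_into_rtrancl)
next
  have "?R2 x y" "?R2 y x"
    by (auto simp: adj_insert_doubleton intro: r_into_rtranclp)
  moreover have "?R2 a b" if "(adj E)\<^sup>*\<^sup>* a b" for a b
    using adj_rtranclp_mono[OF _ that] by blast
  ultimately show "?rhs \<Longrightarrow> ?R2 u w"
    by (meson rtranclp_trans)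
qed

lemma rtranclp_adj_insert_connected:
  assumes "(adj E)\<^sup>*\<^sup>* x y"
  shows "(adj (insert {x, y} E))\<^sup>*\<^sup>* = (adj E)\<^sup>*\<^sup>*"
proof -
  have "(adj E)\<^sup>*\<^sup>* y x" using assms by (rule adj_rtranclp_sym)
  with assms show ?thesis
    unfolding fun_eq_iff rtranclp_adj_insert_doubleton by (blast intro: rtranclp_trans)
qed

lemma card_component_insert_doubleton:
  assumes "\<not> (adj E)\<^sup>*\<^sup>* x y" "finite S"
  shows "card {t \<in> S. (adj (insert {x, y} E))\<^sup>*\<^sup>* x t}
    = card {t \<in> S. (adj E)\<^sup>*\<^sup>* x t} + card {t \<in> S. (adj E)\<^sup>*\<^sup>* y t}"
proof -
  have "\<not> ((adj E)\<^sup>*\<^sup>* x t \<and> (adj E)\<^sup>*\<^sup>* y t)" for t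
    using assms(1) by (meson adj_rtranclp_sym rtranclp_trans)
  then have "{t \<in> S. (adj (insert {x, y} E))\<^sup>*\<^sup>* x t}
      = {t \<in> S. (adj E)\<^sup>*\<^sup>* x t} \<union> {t \<in> S. (adj E)\<^sup>*\<^sup>* y t}"
    "{t \<in> S. (adj E)\<^sup>*\<^sup>* x t} \<inter> {t \<in> S. (adj E)\<^sup>*\<^sup>* y t} = {}"
    by (auto simp: rtranclp_adj_insert_doubleton)
  then show ?thesis using assms(2) by (simp add: card_Un_disjoint)
qed

definition even_components :: "'a set set \<Rightarrow> 'a set \<Rightarrow> bool" where
  "even_components E S \<longleftrightarrow> (\<forall>z. even (card {t \<in> S. (adj E)\<^sup>*\<^sup>* z t}))"

lemma even_componentsI:
  assumes "even (card {t \<in> S. (adj E)\<^sup>*\<^sup>* x t})" "even (card {t \<in> S. (adj E)\<^sup>*\<^sup>* y t})"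
    and "\<And>z. \<not> (adj E)\<^sup>*\<^sup>* z x \<Longrightarrow> \<not> (adj E)\<^sup>*\<^sup>* z y \<Longrightarrow> even (card {t \<in> S. (adj E)\<^sup>*\<^sup>* z t})"
  shows "even_components E S"
  unfolding even_components_def
proof
  fix z
  consider "(adj E)\<^sup>*\<^sup>* z x" | "(adj E)\<^sup>*\<^sup>* z y" | "\<not> (adj E)\<^sup>*\<^sup>* z x" "\<not> (adj E)\<^sup>*\<^sup>* z y"
    by blast
  then show "even (card {t \<in> S. (adj E)\<^sup>*\<^sup>* z t})"
    by cases (use assms in \<open>simp_all only: adj_component_eq\<close>)
qed

lemma even_card_component_sym_diff:
  assumes "finite S" "\<not> r\<^sup>*\<^sup>* x y" "odd (card {t \<in> S. r\<^sup>*\<^sup>* x t})"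
  shows "even (card {t \<in> sym_diff S {x, y}. r\<^sup>*\<^sup>* x t})"
proof -
  let ?C = "{t \<in> S. r\<^sup>*\<^sup>* x t}"
  have "finite ?C" using assms(1) by simp
  have "{t \<in> sym_diff S {x, y}. r\<^sup>*\<^sup>* x t} = (if x \<in> ?C then ?C - {x} else insert x ?C)"
    using assms(2) by auto
  then show ?thesis
    using assms(3) \<open>finite ?C\<close> by (auto simp: card_Diff_singleton dest: odd_pos)
qed

lemma even_components_insert_doubleton:
  assumes "even_components (insert {x, y} E) S" "finite S"
  shows "even_components E S \<or> \<not> (adj E)\<^sup>*\<^sup>* x y \<and> even_components E (sym_diff S {x, y})"
proof (cases "(adj E)\<^sup>*\<^sup>* x y")
  case True
  then show ?thesis using assms(1) by (simp add: even_components_def rtranclp_adj_insert_connected)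
next
  case False
  let ?R = "(adj E)\<^sup>*\<^sup>*" and ?R2 = "(adj (insert {x, y} E))\<^sup>*\<^sup>*"
  have even2: "even (card {t \<in> S. ?R2 z t})" for z
    using assms(1) by (simp add: even_components_def)
  have unrelated: "{t \<in> A. ?R z t} = {t \<in> S. ?R2 z t}"
    if "\<not> ?R z x" "\<not> ?R z y" "A - {x, y} = S - {x, y}" for z A
    using that by (auto simp: rtranclp_adj_insert_doubleton)
  have "even (card {t \<in> S. ?R x t} + card {t \<in> S. ?R y t})"
    using even2[of x] card_component_insert_doubleton[OF False assms(2)] by simp
  show ?thesis
  proof (cases "even (card {t \<in> S. ?R x t})")
    case True
    moreover have "even (card {t \<in> S. ?R y t})" using True \<open>even (_ + _)\<close> by simp
    moreover have "even (card {t \<in> S. ?R z t})" if "\<not> ?R z x" "\<not> ?R z y" for z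
      using unrelated[OF that, of S] even2 by simp
    ultimately show ?thesis by (simp add: even_componentsI)
  next
    case odd: False
    have "\<not> ?R y x" using False adj_rtranclp_sym[of E y x] by blast
    then have "even (card {t \<in> sym_diff S {x, y}. ?R y t})"
      using even_card_component_sym_diff[of S "adj E" y x] assms(2) odd \<open>even (_ + _)\<close>
      by (simp add: insert_commute)
    moreover have "even (card {t \<in> sym_diff S {x, y}. ?R x t})"
      using even_card_component_sym_diff[OF assms(2) False] odd by simp
    moreover have "sym_diff S {x, y} - {x, y} = S - {x, y}" by blast
    then have "even (card {t \<in> sym_diff S {x, y}. ?R z t})" if "\<not> ?R z x" "\<not> ?R z y" for z
      using unrelated[OF that] even2 by (simp only:)
    ultimately show ?thesis using False by (simp add: even_componentsI)
  qed
qed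

lemma adj_rtranclp_bridge:
  assumes "(adj F1)\<^sup>*\<^sup>* a x" "(adj F2)\<^sup>*\<^sup>* y b"
  shows "(adj (insert {x, y} (F1 \<union> F2)))\<^sup>*\<^sup>* a b"
proof -
  have "(adj (insert {x, y} (F1 \<union> F2)))\<^sup>*\<^sup>* a x" "(adj (insert {x, y} (F1 \<union> F2)))\<^sup>*\<^sup>* y b"
    by (rule adj_rtranclp_mono[OF _ assms(1)] adj_rtranclp_mono[OF _ assms(2)], blast)+
  moreover have "adj (insert {x, y} (F1 \<union> F2)) x y" by (simp add: adj_def)
  ultimately show ?thesis by (meson converse_rtranclp_into_rtranclp rtranclp_trans)
qed

text \<open>A link \<open>(D, F)\<close> joins the two vertices of \<open>D\<close> within the edge set \<open>F\<close>, which need not be a path.\<close>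

definition path_pairing :: "'a set set \<Rightarrow> 'a set \<Rightarrow> ('a set \<times> 'a set set) set \<Rightarrow> bool" where
  "path_pairing E S P \<longleftrightarrow> finite P \<and>
     (\<forall>(D, F) \<in> P. F \<subseteq> E \<and> (\<exists>a b. a \<noteq> b \<and> D = {a, b} \<and> (adj F)\<^sup>*\<^sup>* a b)) \<and>
     pairwise (\<lambda>p q. disjnt (fst p) (fst q) \<and> disjnt (snd p) (snd q)) P \<and>
     \<Union>(fst ` P) = S"

lemma path_pairing_empty: "path_pairing E {} {}"
  by (simp add: path_pairing_def)

lemma path_pairing_mono: "path_pairing E S P \<Longrightarrow> E \<subseteq> E' \<Longrightarrow> path_pairing E' S P"
  unfolding path_pairing_def by fast

lemma path_pairing_edges: "path_pairing E S P \<Longrightarrow> (D, F) \<in> P \<Longrightarrow> F \<subseteq> E"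
  unfolding path_pairing_def by fast

lemma path_pairing_subset: "path_pairing E S P \<Longrightarrow> (D, F) \<in> P \<Longrightarrow> D \<subseteq> S"
  unfolding path_pairing_def by force

lemma path_pairing_disjoint:
  "path_pairing E S P \<Longrightarrow> p \<in> P \<Longrightarrow> q \<in> P \<Longrightarrow> p \<noteq> q \<Longrightarrow> disjnt (fst p) (fst q) \<and> disjnt (snd p) (snd q)"
  unfolding path_pairing_def by (auto dest: pairwiseD)

lemma path_pairing_partner:
  assumes "path_pairing E S P" "y \<in> S"
  obtains b F where "({y, b}, F) \<in> P" "y \<noteq> b" "(adj F)\<^sup>*\<^sup>* y b"
proof -
  obtain D F where "(D, F) \<in> P" "y \<in> D" using assms unfolding path_pairing_def by auto
  moreover obtain a b where "a \<noteq> b" "D = {a, b}" "(adj F)\<^sup>*\<^sup>* a b"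
    using assms(1) \<open>(D, F) \<in> P\<close> unfolding path_pairing_def by fast
  ultimately show thesis
    using that adj_rtranclp_sym[of F a b] by (metis empty_iff insert_commute insert_iff)
qed

lemma path_pairing_remove:
  assumes "path_pairing E S P" "Q \<subseteq> P"
  shows "path_pairing E (S - \<Union>(fst ` Q)) (P - Q)"
proof -
  have "\<Union>(fst ` (P - Q)) = S - \<Union>(fst ` Q)"
    using assms path_pairing_disjoint[OF assms(1)] unfolding path_pairing_def disjnt_def by blast
  then show ?thesis
    using assms unfolding path_pairing_def by (auto intro: pairwise_subset)
qed

lemma path_pairing_insert:
  assumes "path_pairing E S P" "a \<noteq> b" "(adj F)\<^sup>*\<^sup>* a b" "F \<subseteq> E" "a \<notin> S" "b \<notin> S"
    and "\<forall>p \<in> P. disjnt F (snd p)"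
  shows "path_pairing E (insert a (insert b S)) (insert ({a, b}, F) P)"
proof -
  have "disjnt {a, b} D" if "(D, F') \<in> P" for D F'
    using assms(1,5,6) that unfolding path_pairing_def by auto
  then show ?thesis
    using assms unfolding path_pairing_def pairwise_insert by (auto simp: disjnt_sym)
qed

lemma path_pairing_card:
  assumes "path_pairing E S P"
  shows "card S = 2 * card P"
proof -
  have "finite P" and cards: "\<forall>p\<in>P. card (fst p) = 2"
    using assms unfolding path_pairing_def by auto
  have "card S = card (\<Union>(fst ` P))"
    using assms by (simp add: path_pairing_def)
  also have "\<dots> = (\<Sum>p\<in>P. card (fst p))"
  proof (rule card_UN_disjoint[OF \<open>finite P\<close>])
    show "\<forall>p\<in>P. finite (fst p)" using cards by (metis card.infinite zero_neq_numeral)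
    show "\<forall>p\<in>P. \<forall>q\<in>P. p \<noteq> q \<longrightarrow> fst p \<inter> fst q = {}"
      using path_pairing_disjoint[OF assms] by (simp add: disjnt_def)
  qed
  also have "\<dots> = 2 * card P"
    using cards by simp
  finally show ?thesis .
qed

lemma path_pairing_add_edge:
  assumes "path_pairing E S P" "x \<noteq> y" "x \<notin> S" "y \<notin> S" "{x, y} \<notin> E"
  shows "path_pairing (insert {x, y} E) (insert x (insert y S)) (insert ({x, y}, {{x, y}}) P)"
proof (rule path_pairing_insert)
  show "path_pairing (insert {x, y} E) S P"
    using assms(1) by (rule path_pairing_mono) blast
  show "(adj {{x, y}})\<^sup>*\<^sup>* x y" by (simp add: adj_def r_into_rtranclp)
  show "\<forall>p\<in>P. disjnt {{x, y}} (snd p)"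
    using assms(1,5) path_pairing_edges[of E S P] by fastforce
qed (use assms in auto)

lemma path_pairing_extend_end:
  assumes "path_pairing E S P" "y \<in> S" "x \<notin> S" "{x, y} \<notin> E"
  obtains P' where "path_pairing (insert {x, y} E) (insert x (S - {y})) P'"
proof -
  obtain b F where link: "({y, b}, F) \<in> P" "y \<noteq> b" "(adj F)\<^sup>*\<^sup>* y b"
    using path_pairing_partner[OF assms(1,2)] .
  let ?P = "P - {({y, b}, F)}"
  have rest: "path_pairing E (S - {y, b}) ?P"
    using path_pairing_remove[OF assms(1), of "{({y, b}, F)}"] link(1) by simp
  have "b \<in> S" using path_pairing_subset[OF assms(1) link(1)] by simp
  have "(adj (insert {x, y} F))\<^sup>*\<^sup>* x b"
    using adj_rtranclp_bridge[of "{}" x x F y b] link(3) by simp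
  moreover have "\<forall>p\<in>?P. disjnt (insert {x, y} F) (snd p)"
    using path_pairing_disjoint[OF assms(1) link(1)] path_pairing_edges[OF assms(1)] assms(4)
    by (fastforce simp: disjnt_def)
  ultimately have "path_pairing (insert {x, y} E) (insert x (insert b (S - {y, b})))
      (insert ({x, b}, insert {x, y} F) ?P)"
    using rest path_pairing_edges[OF assms(1) link(1)] assms(3) \<open>b \<in> S\<close>
    by (intro path_pairing_insert path_pairing_mono[OF rest]) auto
  moreover have "insert x (insert b (S - {y, b})) = insert x (S - {y})"
    using \<open>b \<in> S\<close> link(2) by auto
  ultimately show thesis using that by simp
qed

lemma path_pairing_join_ends:
  assumes "path_pairing E S P" "x \<in> S" "y \<in> S" "x \<noteq> y" "{x, y} \<notin> E"
  obtains P' where "path_pairing (insert {x, y} E) (S - {x, y}) P'"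
proof -
  obtain a F1 where link1: "({x, a}, F1) \<in> P" "x \<noteq> a" "(adj F1)\<^sup>*\<^sup>* x a"
    using path_pairing_partner[OF assms(1,2)] .
  show thesis
  proof (cases "a = y")
    case True
    then have "path_pairing E (S - {x, y}) (P - {({x, a}, F1)})"
      using path_pairing_remove[OF assms(1), of "{({x, a}, F1)}"] link1(1) by simp
    then show thesis using that path_pairing_mono[OF _ subset_insertI] by metis
  next
    case False
    obtain b F2 where link2: "({y, b}, F2) \<in> P" "y \<noteq> b" "(adj F2)\<^sup>*\<^sup>* y b"
      using path_pairing_partner[OF assms(1,3)] .
    have "({x, a}, F1) \<noteq> ({y, b}, F2)" using False assms(4) by (auto simp: doubleton_eq_iff)
    then have disj: "disjnt {x, a} {y, b}" "disjnt F1 F2"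
      using path_pairing_disjoint[OF assms(1) link1(1) link2(1)] by auto
    let ?Q = "{({x, a}, F1), ({y, b}, F2)}" and ?F = "insert {x, y} (F1 \<union> F2)"
    have rest: "path_pairing E (S - ({x, a} \<union> {y, b})) (P - ?Q)"
      using path_pairing_remove[OF assms(1), of ?Q] link1(1) link2(1) by simp
    have "(adj ?F)\<^sup>*\<^sup>* a b"
      using adj_rtranclp_bridge[OF adj_rtranclp_sym[OF link1(3)] link2(3)] .
    moreover have "\<forall>p\<in>P - ?Q. disjnt ?F (snd p)"
      using path_pairing_disjoint[OF assms(1) link1(1)] path_pairing_disjoint[OF assms(1) link2(1)]
        path_pairing_edges[OF assms(1)] assms(5)
      by (fastforce simp: disjnt_def)
    moreover have "F1 \<subseteq> E" "F2 \<subseteq> E"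
      using path_pairing_edges[OF assms(1)] link1(1) link2(1) by auto
    moreover have "a \<noteq> b" using disj(1) by (auto simp: disjnt_def)
    ultimately have "path_pairing (insert {x, y} E) (insert a (insert b (S - ({x, a} \<union> {y, b}))))
        (insert ({a, b}, ?F) (P - ?Q))"
      by (intro path_pairing_insert path_pairing_mono[OF rest]) auto
    moreover have "{x, a} \<subseteq> S" "{y, b} \<subseteq> S"
      using path_pairing_subset[OF assms(1)] link1(1) link2(1) by auto
    then have "insert a (insert b (S - ({x, a} \<union> {y, b}))) = S - {x, y}"
      using disj(1) False link1(2) link2(2) by (auto simp: disjnt_def)
    ultimately show thesis using that by simp
  qed
qed

lemma path_pairing_toggle_edge:
  assumes "path_pairing E (sym_diff S {x, y}) P" "x \<noteq> y" "{x, y} \<notin> E"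
  obtains P' where "path_pairing (insert {x, y} E) S P'"
proof -
  consider (both) "x \<in> S" "y \<in> S" | (only_x) "x \<in> S" "y \<notin> S" | (only_y) "x \<notin> S" "y \<in> S"
    | (neither) "x \<notin> S" "y \<notin> S"
    by blast
  then show thesis
  proof cases
    case both
    then have "sym_diff S {x, y} = S - {x, y}" by auto
    with assms(1) have "path_pairing E (S - {x, y}) P" by (simp only:)
    from path_pairing_add_edge[OF this assms(2) _ _ assms(3)]
    have "path_pairing (insert {x, y} E) (insert x (insert y (S - {x, y}))) (insert ({x, y}, {{x, y}}) P)"
      by blast
    moreover have "insert x (insert y (S - {x, y})) = S" using both by auto
    ultimately show thesis by (auto intro: that)
  next
    case only_x
    then have "sym_diff S {x, y} = insert y (S - {x})" by auto
    with assms(1) have P: "path_pairing E (insert y (S - {x})) P" by (simp only:)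
    have "y \<in> insert y (S - {x})" "x \<notin> insert y (S - {x})" using assms(2) by auto
    from path_pairing_extend_end[OF P this assms(3)]
    obtain P' where "path_pairing (insert {x, y} E) (insert x (insert y (S - {x}) - {y})) P'" .
    moreover have "insert x (insert y (S - {x}) - {y}) = S" using only_x by auto
    ultimately show thesis by (auto intro: that)
  next
    case only_y
    then have "sym_diff S {x, y} = insert x (S - {y})" by auto
    with assms(1) have P: "path_pairing E (insert x (S - {y})) P" by (simp only:)
    have "x \<in> insert x (S - {y})" "y \<notin> insert x (S - {y})" "{y, x} \<notin> E"
      using assms(2,3) by (auto simp: insert_commute)
    from path_pairing_extend_end[OF P this]
    obtain P' where "path_pairing (insert {y, x} E) (insert y (insert x (S - {y}) - {x})) P'" .
    moreover have "insert y (insert x (S - {y}) - {x}) = S" using only_y by auto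
    ultimately show thesis by (auto intro: that simp: insert_commute)
  next
    case neither
    then have "sym_diff S {x, y} = insert x (insert y S)" by auto
    with assms(1) have P: "path_pairing E (insert x (insert y S)) P" by (simp only:)
    from path_pairing_join_ends[OF P _ _ assms(2,3)]
    obtain P' where "path_pairing (insert {x, y} E) (insert x (insert y S) - {x, y}) P'" by blast
    moreover have "insert x (insert y S) - {x, y} = S" using neither by auto
    ultimately show thesis by (auto intro: that)
  qed
qed

lemma even_components_empty_edges:
  assumes "even_components {} S"
  shows "S = {}"
proof (rule ccontr)
  assume "S \<noteq> {}"
  then obtain z where "z \<in> S" by blast
  have "(adj {})\<^sup>*\<^sup>* z t \<longleftrightarrow> z = t" for t
  proof
    show "(adj {})\<^sup>*\<^sup>* z t \<Longrightarrow> z = t"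
      by (induction rule: rtranclp_induct) (simp_all add: adj_def)
  qed simp
  then have "{t \<in> S. (adj {})\<^sup>*\<^sup>* z t} = {z}" using \<open>z \<in> S\<close> by auto
  then have "odd (card {t \<in> S. (adj {})\<^sup>*\<^sup>* z t})" by simp
  then show False using assms unfolding even_components_def by blast
qed

theorem path_pairing_exists:
  "finite E \<Longrightarrow> finite S \<Longrightarrow> even_components E S \<Longrightarrow> \<exists>P. path_pairing E S P"
proof (induction E arbitrary: S rule: finite_induct)
  case empty
  then have "S = {}" by (simp add: even_components_empty_edges)
  then show ?case using path_pairing_empty by auto
next
  case (insert e E)
  have extend: "\<exists>P. path_pairing (insert e E) S P" if even: "even_components E S"
  proof -
    obtain P where "path_pairing E S P" using insert.IH[OF insert.prems(1) even] by blast
    then have "path_pairing (insert e E) S P" by (rule path_pairing_mono) blast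
    then show ?thesis ..
  qed
  show ?case
  proof (cases "\<exists>x y. e = {x, y}")
    case False
    then have "even_components E S"
      using insert.prems(2) adj_insert_non_doubleton[OF False] by (simp add: even_components_def)
    then show ?thesis by (rule extend)
  next
    case True
    then obtain x y where e: "e = {x, y}" by blast
    from even_components_insert_doubleton[OF insert.prems(2)[unfolded e] insert.prems(1)]
    consider (unchanged) "even_components E S"
      | (toggled) "\<not> (adj E)\<^sup>*\<^sup>* x y" "even_components E (sym_diff S {x, y})"
      by blast
    then show ?thesis
    proof cases
      case unchanged
      then show ?thesis by (rule extend)
    next
      case toggled
      then have "x \<noteq> y" by auto
      have "finite (sym_diff S {x, y})" using insert.prems(1) by simp
      then obtain P where P: "path_pairing E (sym_diff S {x, y}) P"
        using insert.IH[OF _ toggled(2)] by blast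
      have "{x, y} \<notin> E" using insert.hyps(2) e by simp
      from path_pairing_toggle_edge[OF P \<open>x \<noteq> y\<close> this]
      obtain P' where "path_pairing (insert {x, y} E) S P'" .
      then show ?thesis unfolding e ..
    qed
  qed
qed

lemma rtrancl_path_successively:
  "rtrancl_path r x xs y \<Longrightarrow> successively r (x # xs) \<and> last (x # xs) = y"
  by (induction rule: rtrancl_path.induct) auto

lemma successively_adj_subset_Union:
  "successively (adj F) (x # y # xs) \<Longrightarrow> set (x # y # xs) \<subseteq> \<Union>F"
  by (induction xs arbitrary: x y) (auto simp: adj_def)

lemma cycle_edges_Cons_subset:
  assumes "successively (adj F) p" "p \<noteq> []"
  shows "cycle_edges (v # p) \<subseteq> insert {v, hd p} (insert {v, last p} F)"
proof
  fix c assume "c \<in> cycle_edges (v # p)"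
  then obtain i where "i < length (v # p)" and c: "c = {(v # p) ! i, (v # p) ! ((i + 1) mod length (v # p))}"
    unfolding cycle_edges_def by blast
  then have i: "i \<le> length p" by simp
  consider "i = 0" | j where "i = Suc j" "Suc j < length p" | "i = length p" "0 < i"
    using i assms(2) by (cases i) fastforce+
  then show "c \<in> insert {v, hd p} (insert {v, last p} F)"
  proof cases
    case 1
    then show ?thesis using c assms(2) by (simp add: hd_conv_nth)
  next
    case 2
    then have "c = {p ! j, p ! Suc j}" using c by simp
    then show ?thesis using successively_nth[OF assms(1) 2(2)] by (simp add: adj_def)
  next
    case 3
    then have "c = {last p, v}" using c assms(2) by (simp add: last_conv_nth nth_Cons')
    then show ?thesis by (simp add: insert_commute)
  qed
qed

lemma is_cycle_mono: "is_cycle E C \<Longrightarrow> E \<subseteq> E' \<Longrightarrow> is_cycle E' C"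
  unfolding is_cycle_def by blast

lemma is_cycle_nonempty: "is_cycle E C \<Longrightarrow> C \<noteq> {}"
  unfolding is_cycle_def cycle_edges_def by fastforce

lemma is_cycle_through_apex:
  assumes "(adj F)\<^sup>*\<^sup>* a b" "a \<noteq> b" "v \<notin> \<Union>F"
  shows "\<exists>C. is_cycle (insert {v, a} (insert {v, b} F)) C"
proof -
  obtain xs0 where "rtrancl_path (adj F) a xs0 b"
    using assms(1) by (auto simp: rtranclp_eq_rtrancl_path)
  then obtain xs where path: "rtrancl_path (adj F) a xs b" and "distinct (a # xs)"
    by (rule rtrancl_path_distinct)
  from rtrancl_path_successively[OF path]
  have walk: "successively (adj F) (a # xs)" and "last (a # xs) = b" by auto
  obtain y ys where xs: "xs = y # ys" using \<open>last (a # xs) = b\<close> assms(2) by (cases xs) auto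
  have "v \<notin> set (a # xs)"
    using successively_adj_subset_Union[of F a y ys] walk xs assms(3) by auto
  then have "distinct (v # a # xs)" "length (v # a # xs) \<ge> 3"
    using \<open>distinct (a # xs)\<close> xs by auto
  moreover have "cycle_edges (v # a # xs) \<subseteq> insert {v, a} (insert {v, b} F)"
    using cycle_edges_Cons_subset[OF walk] \<open>last (a # xs) = b\<close> by simp
  ultimately show ?thesis unfolding is_cycle_def by blast
qed

lemma card_le_phi:
  assumes "finite E" "\<C> \<subseteq> {C. is_cycle E C}" "pairwise disjnt \<C>"
  shows "card \<C> \<le> phi E"
proof -
  have "{C. is_cycle E C} \<subseteq> Pow E" unfolding is_cycle_def by auto
  then have "{card \<C> | \<C>. \<C> \<subseteq> {C. is_cycle E C} \<and> pairwise disjnt \<C>} \<subseteq> {..card (Pow E)}"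
    using assms(1) by (auto intro: card_mono)
  then have "finite {card \<C> | \<C>. \<C> \<subseteq> {C. is_cycle E C} \<and> pairwise disjnt \<C>}"
    using finite_subset by blast
  then show ?thesis unfolding phi_def using assms(2,3) by (auto intro: Max_ge)
qed

lemma path_pairing_link_cycle:
  assumes "path_pairing F S P" "(D, F') \<in> P" "v \<notin> \<Union>F"
  shows "\<exists>C. is_cycle (F' \<union> (\<lambda>u. {v, u}) ` D) C"
proof -
  obtain a b where "D = {a, b}" "a \<noteq> b" "(adj F')\<^sup>*\<^sup>* a b" "F' \<subseteq> F"
    using assms(1,2) unfolding path_pairing_def by fast
  with is_cycle_through_apex[of F' a b v] assms(3) show ?thesis
    by (auto simp: insert_commute)
qed

lemma disjoint_cycles_from_path_pairing:
  assumes "path_pairing F S P" "F \<subseteq> E" "v \<notin> \<Union>F" "\<forall>s\<in>S. {v, s} \<in> E"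
  shows "\<exists>\<C> \<subseteq> {C. is_cycle E C}. pairwise disjnt \<C> \<and> card \<C> = card P"
proof -
  define H where "H = (\<lambda>(D, F'). F' \<union> (\<lambda>u. {v, u}) ` D)"
  have "\<exists>C. is_cycle (H q) C" if "q \<in> P" for q
    using path_pairing_link_cycle[OF assms(1) _ assms(3), of "fst q" "snd q"] that
    by (simp add: H_def case_prod_beta)
  then obtain cyc where cyc: "\<forall>q\<in>P. is_cycle (H q) (cyc q)" by metis
  have H_subset: "H q \<subseteq> E" if "q \<in> P" for q
  proof -
    obtain D F' where q: "q = (D, F')" by fastforce
    with that have "D \<subseteq> S" "F' \<subseteq> F"
      using path_pairing_subset[OF assms(1)] path_pairing_edges[OF assms(1)] by auto
    then show ?thesis using assms(2,4) by (auto simp: H_def q)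
  qed
  have H_disjoint: "disjnt (H p) (H q)" if "p \<in> P" "q \<in> P" "p \<noteq> q" for p q
  proof -
    obtain D1 F1 D2 F2 where p: "p = (D1, F1)" and q: "q = (D2, F2)" by fastforce
    have "F1 \<subseteq> F" "F2 \<subseteq> F"
      using path_pairing_edges[OF assms(1)] that(1,2) p q by blast+
    then have "v \<notin> \<Union>F1" "v \<notin> \<Union>F2" using assms(3) by blast+
    then show ?thesis
      using path_pairing_disjoint[OF assms(1) that]
      by (auto simp: H_def p q disjnt_def doubleton_eq_iff)
  qed
  have cyc_subset: "cyc q \<subseteq> H q" if "q \<in> P" for q
    using cyc that unfolding is_cycle_def by blast
  have cyc_disjoint: "disjnt (cyc p) (cyc q)" if "p \<in> P" "q \<in> P" "p \<noteq> q" for p q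
    using H_disjoint[OF that] cyc_subset[OF that(1)] cyc_subset[OF that(2)]
    by (meson disjnt_subset1 disjnt_subset2)
  have "inj_on cyc P"
  proof (rule inj_onI, rule ccontr)
    fix p q assume "p \<in> P" "q \<in> P" "cyc p = cyc q" "p \<noteq> q"
    then show False
      using cyc_disjoint[of p q] is_cycle_nonempty[of "H p" "cyc p"] cyc by (auto simp: disjnt_def)
  qed
  moreover have "cyc ` P \<subseteq> {C. is_cycle E C}"
    using cyc H_subset is_cycle_mono by fastforce
  moreover have "pairwise disjnt (cyc ` P)"
    unfolding pairwise_image by (auto intro: pairwiseI cyc_disjoint)
  ultimately show ?thesis using card_image by blast
qed

lemma degree_eq_card_neighbours:
  assumes "\<forall>e\<in>E. \<exists>x y. e = {x, y}"
  shows "degree E v = card {u. {v, u} \<in> E}"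
proof -
  have "{e \<in> E. v \<in> e} = (\<lambda>u. {v, u}) ` {u. {v, u} \<in> E}"
  proof
    show "{e \<in> E. v \<in> e} \<subseteq> (\<lambda>u. {v, u}) ` {u. {v, u} \<in> E}"
    proof
      fix e assume e: "e \<in> {e \<in> E. v \<in> e}"
      then obtain x y where "e = {x, y}" using assms by blast
      with e have "e = {v, if v = x then y else x}" by auto
      with e show "e \<in> (\<lambda>u. {v, u}) ` {u. {v, u} \<in> E}" by (intro image_eqI) auto
    qed
  qed auto
  moreover have "inj_on (\<lambda>u. {v, u}) {u. {v, u} \<in> E}"
    by (auto simp: inj_on_def doubleton_eq_iff)
  ultimately show ?thesis by (simp add: degree_def card_image)
qed

lemma even_components_connected:
  assumes "connected_graph V E" "S \<subseteq> V" "even (card S)"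
  shows "even_components E S"
  unfolding even_components_def
proof
  fix z
  show "even (card {t \<in> S. (adj E)\<^sup>*\<^sup>* z t})"
  proof (cases "\<exists>s\<in>S. (adj E)\<^sup>*\<^sup>* z s")
    case True
    then obtain s where "s \<in> S" "(adj E)\<^sup>*\<^sup>* z s" by blast
    then have "(adj E)\<^sup>*\<^sup>* z t" if "t \<in> S" for t
      using assms(1,2) that rtranclp_trans unfolding connected_graph_def by (metis subsetD)
    then have "{t \<in> S. (adj E)\<^sup>*\<^sup>* z t} = S" by blast
    then show ?thesis using assms(3) by simp
  next
    case False
    then have "{t \<in> S. (adj E)\<^sup>*\<^sup>* z t} = {}" by blast
    then show ?thesis by (metis card.empty even_zero)
  qed
qed

lemma simple_graph_finite_edges:
  assumes "simple_graph V E"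
  shows "finite E"
proof -
  have "finite V" "E \<subseteq> Pow V" using assms unfolding simple_graph_def by auto
  then show ?thesis by (meson finite_Pow_iff finite_subset)
qed

theorem half_degree_le_phi:
  assumes "simple_graph V E" "v \<in> V" "connected_graph (V - {v}) (del_vertex_edges E v)"
  shows "degree E v div 2 \<le> phi E"
proof -
  let ?N = "{u. {v, u} \<in> E}" and ?G = "del_vertex_edges E v"
  have edges: "\<forall>e\<in>E. \<exists>x y. x \<noteq> y \<and> x \<in> V \<and> y \<in> V \<and> e = {x, y}"
    using assms(1) by (simp add: simple_graph_def)
  then have "card ?N = degree E v" by (metis degree_eq_card_neighbours)
  moreover have "?N \<subseteq> V - {v}"
    using edges by (fastforce simp: doubleton_eq_iff)
  ultimately obtain S where "S \<subseteq> ?N" "card S = 2 * (degree E v div 2)"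
    by (metis obtain_subset_with_card_n div_times_less_eq_dividend mult.commute)
  have "finite E" using assms(1) by (rule simple_graph_finite_edges)
  then have "finite ?G" by (simp add: del_vertex_edges_def)
  moreover have "finite S" using \<open>S \<subseteq> ?N\<close> \<open>?N \<subseteq> V - {v}\<close> assms(1)
    by (meson finite_Diff finite_subset simple_graph_def)
  moreover have "even_components ?G S"
    using even_components_connected[OF assms(3)] \<open>S \<subseteq> ?N\<close> \<open>?N \<subseteq> V - {v}\<close> \<open>card S = _\<close> by simp
  ultimately obtain P where P: "path_pairing ?G S P" using path_pairing_exists by blast
  have "?G \<subseteq> E" "v \<notin> \<Union>?G" "\<forall>s\<in>S. {v, s} \<in> E"
    using \<open>S \<subseteq> ?N\<close> by (auto simp: del_vertex_edges_def)
  from disjoint_cycles_from_path_pairing[OF P this] \<open>finite E\<close>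
  have "card P \<le> phi E" using card_le_phi by metis
  moreover have "card S = 2 * card P" by (rule path_pairing_card[OF P])
  ultimately show ?thesis using \<open>card S = 2 * (degree E v div 2)\<close> by simp
qed

theorem corollary2p2:
  fixes V :: "'a set" and E :: "'a set set"
  assumes "simple_graph V E"
    and "two_connected V E"
  shows "phi E \<ge> max_degree V E div 2"
proof -
  have "finite V" "V \<noteq> {}"
    using assms unfolding simple_graph_def two_connected_def connected_graph_def by auto
  then obtain v where "v \<in> V" "degree E v = max_degree V E"
    unfolding max_degree_def by (metis Max_in finite_imageI image_iff image_is_empty)
  moreover have "connected_graph (V - {v}) (del_vertex_edges E v)"
    using assms(2) \<open>v \<in> V\<close> by (simp add: two_connected_def)
  ultimately show ?thesis using half_degree_le_phi[OF assms(1)] by metis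
qed

end
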